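(* Let $\mathcal{G}=(G,\lambda)$ be a simple temporal clique with vertex set $V$, and let $u,v,w$ be three distinct vertices such that $\{u,v\}=e^-(v)$ and $\{u,w\}=e^+(w)$. Let $S'$ be a temporal spanner of the simple temporal clique $\mathcal{G}[V\setminus\{u\}]$ (the complete graph on $V\setminus\{u\}$ with the restriction of $\lambda$). Then $S=S'\cup\{\{u,v\},\{u,w\}\}$ is a temporal spanner of $\mathcal{G}$.
   Context: A simple temporal clique is a pair $\mathcal{G}=(G,\lambda)$ where $G=(V,E)$ is the complete graph on a finite vertex set $V$ and $\lambda:E\to\mathbb{N}$ assigns to each edge a single integer label such that any two distinct edges sharing an endpoint have different labels. A journey from $x$ to $y$ is a sequence of vertices $x=u_0,u_1,\dots,u_k=y$ ($k\ge1$) with $\lambda(\{u_{i-1},u_i\})<\lambda(\{u_i,u_{i+1}\})$ for all $1\le i<k$. A set $E'\subseteq E$ is a temporal spanner of $\mathcal{G}$ if for every ordered pair of distinct vertices $x,y$ there is a journey from $x$ to $y$ all of whose edges belong to $E'$. For a vertex $v$, $e^-(v)$ (resp. $e^+(v)$) denotes the edge incident to $v$ with the smallest (resp. largest) label. *)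

theory Defs
  imports Main
begin

definition edges :: "'a set \<Rightarrow> 'a set set" where
  "edges V = {e. e \<subseteq> V \<and> card e = 2}"

definition simple_temporal_clique :: "'a set \<Rightarrow> ('a set \<Rightarrow> nat) \<Rightarrow> bool" where
  "simple_temporal_clique V lam \<longleftrightarrow> finite V \<and>
     (\<forall>e\<in>edges V. \<forall>f\<in>edges V. e \<noteq> f \<and> e \<inter> f \<noteq> {} \<longrightarrow> lam e \<noteq> lam f)"

definition journey :: "('a set \<Rightarrow> nat) \<Rightarrow> 'a set set \<Rightarrow> 'a \<Rightarrow> 'a \<Rightarrow> 'a list \<Rightarrow> bool" where
  "journey lam E x y p \<longleftrightarrow> length p \<ge> 2 \<and> hd p = x \<and> last p = y \<and>
     (\<forall>i. i + 1 < length p \<longrightarrow> p ! i \<noteq> p ! (i+1) \<and> {p ! i, p ! (i+1)} \<in> E) \<and>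
     (\<forall>i. i + 2 < length p \<longrightarrow> lam {p ! i, p ! (i+1)} < lam {p ! (i+1), p ! (i+2)})"

definition temporal_spanner :: "'a set \<Rightarrow> ('a set \<Rightarrow> nat) \<Rightarrow> 'a set set \<Rightarrow> bool" where
  "temporal_spanner V lam E' \<longleftrightarrow> E' \<subseteq> edges V \<and>
     (\<forall>x\<in>V. \<forall>y\<in>V. x \<noteq> y \<longrightarrow> (\<exists>p. journey lam E' x y p))"

definition e_minus :: "'a set \<Rightarrow> ('a set \<Rightarrow> nat) \<Rightarrow> 'a \<Rightarrow> 'a set" where
  "e_minus V lam v = (ARG_MIN lam e. e \<in> edges V \<and> v \<in> e)"

definition e_plus :: "'a set \<Rightarrow> ('a set \<Rightarrow> nat) \<Rightarrow> 'a \<Rightarrow> 'a set" where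
  "e_plus V lam v = (ARG_MAX lam e. e \<in> edges V \<and> v \<in> e)"

end

theory Submission
  imports Defs
begin

text \<open>Since {u, v} carries the smallest label at v, every journey of S' leaving v can be
  preceded by it, which reaches all of V - {u} from u; symmetrically, since
  {u, w} carries the largest label at w, every journey of S' ending in w can be
  extended by it. Journeys avoiding u are already provided by S'.\<close>

lemma journey_mono: "journey lam E x y p \<Longrightarrow> E \<subseteq> F \<Longrightarrow> journey lam F x y p"
  unfolding journey_def by blast

lemma journey_edge: "x \<noteq> y \<Longrightarrow> {x, y} \<in> E \<Longrightarrow> journey lam E x y [x, y]"
  unfolding journey_def by (auto simp: less_Suc_eq)

lemma journey_first_edge:
  assumes "journey lam E x y p"
  shows "p ! 0 = x" and "{x, p ! 1} \<in> E"
proof -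
  have "length p \<ge> 2" "hd p = x" and step: "{p ! 0, p ! 1} \<in> E"
    using assms unfolding journey_def by (auto dest!: spec[of _ 0])
  then show "p ! 0 = x" by (cases p) auto
  with step show "{x, p ! 1} \<in> E" by simp
qed

lemma journey_last_edge:
  assumes "journey lam E x y p"
  shows "p ! (length p - 1) = y" and "{p ! (length p - 2), y} \<in> E"
proof -
  have len: "length p \<ge> 2" and "last p = y"
    and step: "{p ! (length p - 2), p ! (length p - 2 + 1)} \<in> E"
    using assms unfolding journey_def by (auto dest!: spec[of _ "length p - 2"])
  then show last: "p ! (length p - 1) = y" by (cases p rule: rev_cases) auto
  have "length p - 2 + 1 = length p - 1" using len by simp
  with step last show "{p ! (length p - 2), y} \<in> E" by simp
qed

lemma journey_Cons:
  assumes "journey lam E v y p" and "a \<noteq> v" and "{a, v} \<in> E"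
    and "lam {a, v} < lam {v, p ! 1}"
  shows "journey lam E a y (a # p)"
  using assms journey_first_edge(1)[OF assms(1)]
  unfolding journey_def by (auto simp: nth_Cons split: nat.split)

lemma journey_snoc:
  assumes "journey lam E x w p" and "w \<noteq> a" and "{w, a} \<in> E"
    and "lam {p ! (length p - 2), w} < lam {w, a}"
  shows "journey lam E x a (p @ [a])"
proof -
  have "length p \<ge> 2" and "p ! (length p - 1) = w"
    using assms(1) journey_last_edge(1)[OF assms(1)] unfolding journey_def by auto
  moreover have "i + 1 = length p \<Longrightarrow> i = length p - 1" "i + 2 = length p \<Longrightarrow> i = length p - 2"
    for i by auto
  ultimately show ?thesis using assms
    unfolding journey_def by (auto simp: nth_append less_Suc_eq hd_append)
qed

lemma finite_edges: "finite V \<Longrightarrow> finite (edges V)"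
  unfolding edges_def by (rule finite_subset[of _ "Pow V"]) auto

lemma edges_mono: "V \<subseteq> W \<Longrightarrow> edges V \<subseteq> edges W"
  unfolding edges_def by auto

lemma e_minus_less:
  assumes "simple_temporal_clique V lam" and "e \<in> edges V" and "v \<in> e"
    and "e \<noteq> e_minus V lam v"
  shows "lam (e_minus V lam v) < lam e"
proof -
  have "e_minus V lam v \<in> edges V" "v \<in> e_minus V lam v" "lam (e_minus V lam v) \<le> lam e"
    using arg_min_nat_lemma[of "\<lambda>e. e \<in> edges V \<and> v \<in> e" _ lam] assms(2,3)
    unfolding e_minus_def by auto
  with assms show ?thesis
    unfolding simple_temporal_clique_def by (metis disjoint_iff order_neq_le_trans)
qed

lemma less_e_plus:
  assumes "simple_temporal_clique V lam" and "e \<in> edges V" and "w \<in> e"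
    and "e \<noteq> e_plus V lam w"
  shows "lam e < lam (e_plus V lam w)"
proof -
  have "\<forall>f. f \<in> edges V \<and> w \<in> f \<longrightarrow> lam f < Suc (Max (lam ` edges V))"
    using assms(1) unfolding simple_temporal_clique_def by (simp add: finite_edges le_imp_less_Suc)
  then have "e_plus V lam w \<in> edges V" "w \<in> e_plus V lam w" "lam e \<le> lam (e_plus V lam w)"
    using arg_max_nat_lemma[of "\<lambda>e. e \<in> edges V \<and> w \<in> e"] assms(2,3)
    unfolding e_plus_def by auto
  with assms show ?thesis
    unfolding simple_temporal_clique_def by (metis disjoint_iff order_neq_le_trans)
qed

lemma journey_Cons_e_minus:
  assumes "simple_temporal_clique V lam" and "journey lam E v y p" and "E \<subseteq> edges V"
    and "e_minus V lam v = {u, v}" and "{u, v} \<notin> E" and "u \<noteq> v"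
  shows "journey lam (insert {u, v} E) u y (u # p)"
proof -
  have "{v, p ! 1} \<in> E" by (rule journey_first_edge(2)[OF assms(2)])
  then have "{v, p ! 1} \<in> edges V" and "{v, p ! 1} \<noteq> e_minus V lam v"
    using assms(3-5) by auto
  from e_minus_less[OF assms(1) this(1) insertI1 this(2)]
  have "lam {u, v} < lam {v, p ! 1}" unfolding assms(4) .
  moreover have "journey lam (insert {u, v} E) v y p"
    using assms(2) by (rule journey_mono) blast
  ultimately show ?thesis
    using assms(6) by (intro journey_Cons) auto
qed

lemma journey_snoc_e_plus:
  assumes "simple_temporal_clique V lam" and "journey lam E x w p" and "E \<subseteq> edges V"
    and "e_plus V lam w = {u, w}" and "{u, w} \<notin> E" and "u \<noteq> w"
  shows "journey lam (insert {u, w} E) x u (p @ [u])"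
proof -
  have "{p ! (length p - 2), w} \<in> E" by (rule journey_last_edge(2)[OF assms(2)])
  then have "{p ! (length p - 2), w} \<in> edges V" and "{p ! (length p - 2), w} \<noteq> e_plus V lam w"
    using assms(3-5) by auto
  from less_e_plus[OF assms(1) this(1) insertI2[OF insertI1] this(2)]
  have "lam {p ! (length p - 2), w} < lam {w, u}" unfolding assms(4) by (simp add: insert_commute)
  moreover have "journey lam (insert {u, w} E) x w p"
    using assms(2) by (rule journey_mono) blast
  ultimately show ?thesis
    using assms(6) by (intro journey_snoc) (auto simp: insert_commute)
qed

lemma temporal_spanner_journey_from_e_minus:
  assumes "simple_temporal_clique V lam" and "temporal_spanner (V - {u}) lam S'"
    and "v \<in> V - {u}" and "e_minus V lam v = {u, v}" and "y \<in> V - {u}"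
  shows "\<exists>p. journey lam (insert {u, v} S') u y p"
proof (cases "y = v")
  case True
  with assms(3) show ?thesis by (blast intro: journey_edge)
next
  case False
  have "S' \<subseteq> edges (V - {u})" using assms(2) unfolding temporal_spanner_def by blast
  then have "S' \<subseteq> edges V" and "{u, v} \<notin> S'" by (auto simp: edges_def)
  moreover have "\<exists>p. journey lam S' v y p"
    using assms(2,3,5) False unfolding temporal_spanner_def by auto
  ultimately show ?thesis
    using journey_Cons_e_minus[OF assms(1) _ _ assms(4)] assms(3) by blast
qed

lemma temporal_spanner_journey_to_e_plus:
  assumes "simple_temporal_clique V lam" and "temporal_spanner (V - {u}) lam S'"
    and "w \<in> V - {u}" and "e_plus V lam w = {u, w}" and "x \<in> V - {u}"
  shows "\<exists>p. journey lam (insert {u, w} S') x u p"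
proof (cases "x = w")
  case True
  with assms(3) show ?thesis by (metis insert_commute insertI1 journey_edge DiffE singletonI)
next
  case False
  have "S' \<subseteq> edges (V - {u})" using assms(2) unfolding temporal_spanner_def by blast
  then have "S' \<subseteq> edges V" and "{u, w} \<notin> S'" by (auto simp: edges_def)
  moreover have "\<exists>p. journey lam S' x w p"
    using assms(2,3,5) False unfolding temporal_spanner_def by auto
  ultimately show ?thesis
    using journey_snoc_e_plus[OF assms(1) _ _ assms(4)] assms(3) by blast
qed

theorem theorem1:
  fixes V :: "'a set" and lam :: "'a set \<Rightarrow> nat" and u v w :: 'a and S' :: "'a set set"
  assumes "simple_temporal_clique V lam"
    and "u \<in> V" and "v \<in> V" and "w \<in> V"
    and "u \<noteq> v" and "u \<noteq> w" and "v \<noteq> w"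
    and "{u, v} = e_minus V lam v"
    and "{u, w} = e_plus V lam w"
    and "temporal_spanner (V - {u}) lam S'"
  shows "temporal_spanner V lam (S' \<union> {{u, v}, {u, w}})"
  unfolding temporal_spanner_def
proof (intro conjI ballI impI)
  have "S' \<subseteq> edges V"
    using assms(10) edges_mono[of "V - {u}" V] unfolding temporal_spanner_def by blast
  with assms(2-7) show "S' \<union> {{u, v}, {u, w}} \<subseteq> edges V" by (auto simp: edges_def)
next
  fix x y assume "x \<in> V" "y \<in> V" "x \<noteq> y"
  then consider "x \<in> V - {u}" "y \<in> V - {u}" | "x = u" "y \<in> V - {u}" | "x \<in> V - {u}" "y = u"
    by blast
  then show "\<exists>p. journey lam (S' \<union> {{u, v}, {u, w}}) x y p"
  proof cases
    case 1
    with assms(10) \<open>x \<noteq> y\<close> show ?thesis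
      unfolding temporal_spanner_def by (blast intro: journey_mono)
  next
    case 2
    with temporal_spanner_journey_from_e_minus[OF assms(1,10)] assms(3,5,8) show ?thesis
      by (blast intro: journey_mono)
  next
    case 3
    with temporal_spanner_journey_to_e_plus[OF assms(1,10)] assms(4,6,9) show ?thesis
      by (blast intro: journey_mono)
  qed
qed

end
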